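(* Let $f(x)=\ln(e-x)$ for $0\le x\le e-1$ and $f(x)=0$ for $x>e-1$. Then $f$ is a standard allocation rule and the large-market approximation ratio of the mechanism $\mathrm{Truthful}(f)$ equals $1-1/e$. Moreover, for every standard allocation rule $g$, the large-market approximation ratio of $\mathrm{Truthful}(g)$ is at most $1-1/e$. (Thus $f$ is an optimal choice of standard allocation rule for this family of mechanisms.)
   Context: Setting (budgeted procurement with divisible items): a buyer with budget $B>0$ faces a finite set $S=\{1,\dots,n\}$ of sellers; seller $i$ owns one item that gives the buyer utility $u_i>0$ and has a private cost $c_i\ge 0$. Items are divisible: buying a fraction $x_i\in[0,1]$ of item $i$ costs seller $i$ the amount $x_ic_i$ and gives the buyer utility $x_iu_i$. $U^\star$ denotes the optimal fractional knapsack value $\max\{\sum_i u_i\alpha_i:\alpha\in[0,1]^n,\ \sum_i c_i\alpha_i\le B\}$. Let $c_{\max}=\max_i c_i$ and call $\theta=c_{\max}/B$ the largeness ratio of the instance. A standard allocation rule is a non-increasing function $f:[0,\infty)\to[0,1]$ with $f(0)=1$ and $f(e-1)=0$ (hence $f(x)=0$ for $x\ge e-1$). For $r>0$ let $f_r(x)=f(x/r)$, let $Q_r(x)=x f_r(x)+\int_x^\infty f_r(y)\,dy$ for $x\ge 0$, and let $P_{i,r}(x)=u_iQ_r(x/u_i)$. Mechanism $\mathrm{EnvyFree}(f)$ on cost vector $c$: the stopping rate $r^\star(c)$ is the value at which, starting from $r=\infty$ and decreasing $r$, the total payment $\sum_{i\in S}P_{i,r}(c_i)$ (a nondecreasing function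 of $r$) first becomes equal to $B$; it buys $f_{r^\star}(c_i/u_i)$ of item $i$ and pays $P_{i,r^\star}(c_i)$ to seller $i$. Mechanism $\mathrm{Truthful}(f)$ on cost vector $c$: for each seller $i$, let $r_i$ be the stopping rate of $\mathrm{EnvyFree}(f)$ on the cost vector obtained from $c$ by replacing $c_i$ with $0$ (all other costs unchanged); buy $f_{r_i}(c_i/u_i)$ of item $i$ and pay $P_{i,r_i}(c_i)$ to seller $i$. Large-market approximation ratio of a mechanism $M$ (evaluated with true costs): $\lim_{\theta_0\to 0}\ \inf_I \mathcal U_M(I)/U^\star(I)$, where the infimum is over instances $I$ with largeness ratio at most $\theta_0$ and $\mathcal U_M(I)=\sum_i u_ix_i$ is the buyer's utility from $M$'s allocation. *)

theory Defs
  imports "HOL-Analysis.Analysis"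
begin

definition standard_alloc :: "(real \<Rightarrow> real) \<Rightarrow> bool" where
  "standard_alloc f \<longleftrightarrow>
     (\<forall>x y. 0 \<le> x \<longrightarrow> x \<le> y \<longrightarrow> f y \<le> f x) \<and>
     (\<forall>x. 0 \<le> x \<longrightarrow> 0 \<le> f x \<and> f x \<le> 1) \<and>
     f 0 = 1 \<and> f (exp 1 - 1) = 0"

definition ln_rule :: "real \<Rightarrow> real" where
  "ln_rule x = (if 0 \<le> x \<and> x \<le> exp 1 - 1 then ln (exp 1 - x) else 0)"

definition scaled :: "(real \<Rightarrow> real) \<Rightarrow> real \<Rightarrow> real \<Rightarrow> real" where
  "scaled f r x = f (x / r)"

definition Qr :: "(real \<Rightarrow> real) \<Rightarrow> real \<Rightarrow> real \<Rightarrow> real" where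
  "Qr f r x = x * scaled f r x + integral {x..} (scaled f r)"

definition Pay :: "(real \<Rightarrow> real) \<Rightarrow> real \<Rightarrow> real \<Rightarrow> real \<Rightarrow> real" where
  "Pay f r ui x = ui * Qr f r (x / ui)"

definition total_pay :: "(real \<Rightarrow> real) \<Rightarrow> nat set \<Rightarrow> (nat \<Rightarrow> real) \<Rightarrow> (nat \<Rightarrow> real) \<Rightarrow> real \<Rightarrow> real" where
  "total_pay f S u c r = (\<Sum>i\<in>S. Pay f r (u i) (c i))"

text \<open>Stopping rate of EnvyFree(f): decreasing r from infinity, the first value at which the
  (nondecreasing in r) total payment reaches B, i.e. the supremum of the rates r > 0 whose total
  payment is at most B. Convention (degenerate case only, when this set is unbounded, which
  happens only if f vanishes on (0,inf)): rate 1.\<close>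
definition stop_rate :: "(real \<Rightarrow> real) \<Rightarrow> nat set \<Rightarrow> (nat \<Rightarrow> real) \<Rightarrow> (nat \<Rightarrow> real) \<Rightarrow> real \<Rightarrow> real" where
  "stop_rate f S u c B =
     (let R = {r. 0 < r \<and> total_pay f S u c r \<le> B} in if bdd_above R then Sup R else 1)"

definition truthful_alloc :: "(real \<Rightarrow> real) \<Rightarrow> nat set \<Rightarrow> (nat \<Rightarrow> real) \<Rightarrow> (nat \<Rightarrow> real) \<Rightarrow> real \<Rightarrow> nat \<Rightarrow> real" where
  "truthful_alloc f S u c B i = scaled f (stop_rate f S u (c(i := 0)) B) (c i / u i)"

definition truthful_pay :: "(real \<Rightarrow> real) \<Rightarrow> nat set \<Rightarrow> (nat \<Rightarrow> real) \<Rightarrow> (nat \<Rightarrow> real) \<Rightarrow> real \<Rightarrow> nat \<Rightarrow> real" where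
  "truthful_pay f S u c B i = Pay f (stop_rate f S u (c(i := 0)) B) (u i) (c i)"

definition truthful_util :: "(real \<Rightarrow> real) \<Rightarrow> nat set \<Rightarrow> (nat \<Rightarrow> real) \<Rightarrow> (nat \<Rightarrow> real) \<Rightarrow> real \<Rightarrow> real" where
  "truthful_util f S u c B = (\<Sum>i\<in>S. u i * truthful_alloc f S u c B i)"

definition opt_util :: "nat set \<Rightarrow> (nat \<Rightarrow> real) \<Rightarrow> (nat \<Rightarrow> real) \<Rightarrow> real \<Rightarrow> real" where
  "opt_util S u c B = Sup {(\<Sum>i\<in>S. u i * a i) | a.
       (\<forall>i\<in>S. 0 \<le> a i \<and> a i \<le> 1) \<and> (\<Sum>i\<in>S. c i * a i) \<le> B}"

definition valid_instance :: "nat set \<Rightarrow> (nat \<Rightarrow> real) \<Rightarrow> (nat \<Rightarrow> real) \<Rightarrow> real \<Rightarrow> bool" where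
  "valid_instance S u c B \<longleftrightarrow> finite S \<and> S \<noteq> {} \<and> 0 < B \<and> (\<forall>i\<in>S. 0 < u i \<and> 0 \<le> c i)"

definition largeness :: "nat set \<Rightarrow> (nat \<Rightarrow> real) \<Rightarrow> real \<Rightarrow> real" where
  "largeness S c B = Max (c ` S) / B"

definition worst_ratio :: "(real \<Rightarrow> real) \<Rightarrow> real \<Rightarrow> real" where
  "worst_ratio f \<theta>0 = Inf {truthful_util f S u c B / opt_util S u c B | S u c B.
       valid_instance S u c B \<and> largeness S c B \<le> \<theta>0}"

definition lm_ratio_is :: "(real \<Rightarrow> real) \<Rightarrow> real \<Rightarrow> bool" where
  "lm_ratio_is f L \<longleftrightarrow> (worst_ratio f \<longlongrightarrow> L) (at_right 0)"

end

theory Submission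
  imports Defs
begin

text \<open>For the logarithmic rule \<open>f\<close> the payment function \<open>Q(y) = y f(y) + \<integral>\<^sub>y\<^sup>\<infinity> f\<close> is explicit and
  satisfies the dual inequality \<open>(1 - 1/e) \<alpha> + (Q(y) - y \<alpha>) / e \<le> f(y)\<close> for \<open>0 \<le> \<alpha> \<le> 1\<close>. Summed at
  the smallest rate used by \<open>Truthful(f)\<close>, whose payments exhaust the budget up to one cost, i.e. up
  to a fraction \<open>\<theta>\<close> of it, it bounds the knapsack optimum by \<open>U / ((1 - 1/e)(1 - \<theta>))\<close>.

  Conversely, if \<open>Truthful(g)\<close> had worst ratio \<open>b > 1 - 1/e\<close>, markets made of many small copies of two
  sellers, with budget just below the payment at rate 1, force \<open>b (p\<^sub>1 + p\<^sub>2) \<le> p\<^sub>1 g(y\<^sub>1) + p\<^sub>2 g(y\<^sub>2)\<close>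
  whenever \<open>p\<^sub>1 y\<^sub>1 + p\<^sub>2 y\<^sub>2 \<le> p\<^sub>1 Q(y\<^sub>1) + p\<^sub>2 Q(y\<^sub>2)\<close>. A separating slope \<open>\<kappa>\<close> turns this into the
  differential inequality \<open>b - \<kappa> y + \<kappa> G(y) \<le> -G'(y) (1 - \<kappa> y)\<close> for \<open>G(y) = \<integral>\<^sub>y\<^sup>\<infinity> g\<close>, and
  integrating it up to \<open>y = (1 - 1/e) / \<kappa>\<close> contradicts \<open>G \<ge> 0\<close>.\<close>

lemma
  assumes "standard_alloc g"
  shows standard_alloc_antimono: "0 \<le> x \<Longrightarrow> x \<le> y \<Longrightarrow> g y \<le> g x"
    and standard_alloc_nonneg: "0 \<le> x \<Longrightarrow> 0 \<le> g x"
    and standard_alloc_le_one: "0 \<le> x \<Longrightarrow> g x \<le> 1"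
    and standard_alloc_at_zero: "g 0 = 1"
  using assms by (auto simp: standard_alloc_def)

lemma standard_alloc_vanishes:
  assumes "standard_alloc g" "exp 1 - 1 \<le> x"
  shows "g x = 0"
proof -
  have e: "0 \<le> exp (1::real) - 1" by simp
  have "g x \<le> g (exp 1 - 1)" by (rule standard_alloc_antimono[OF assms(1)]) (use assms e in auto)
  moreover have "0 \<le> g x" by (rule standard_alloc_nonneg[OF assms(1)]) (use assms e in linarith)
  ultimately show ?thesis using assms(1) unfolding standard_alloc_def by linarith
qed

lemma scaled_one [simp]: "scaled g 1 = g"
  by (simp add: scaled_def fun_eq_iff)

subsection \<open>Integrals of bounded non-increasing functions with bounded support\<close>

definition alloc_profile :: "(real \<Rightarrow> real) \<Rightarrow> real \<Rightarrow> bool" where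
  "alloc_profile h M \<longleftrightarrow> 0 \<le> M \<and> (\<forall>x y. 0 \<le> x \<longrightarrow> x \<le> y \<longrightarrow> h y \<le> h x) \<and>
     (\<forall>x. 0 \<le> x \<longrightarrow> 0 \<le> h x \<and> h x \<le> 1) \<and> (\<forall>x. M \<le> x \<longrightarrow> h x = 0)"

lemma alloc_profile_scaled:
  assumes "standard_alloc g" "0 < r"
  shows "alloc_profile (scaled g r) ((exp 1 - 1) * r)"
  unfolding alloc_profile_def scaled_def
proof (intro conjI allI impI)
  show "0 \<le> (exp 1 - 1) * r" using assms by simp
  fix x y :: real
  assume "0 \<le> x" "x \<le> y"
  with assms show "g (y / r) \<le> g (x / r)"
    by (intro standard_alloc_antimono[OF assms(1)]) (auto simp: divide_right_mono)
next
  fix x :: real assume "0 \<le> x"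
  then show "0 \<le> g (x / r)" "g (x / r) \<le> 1"
    using assms standard_alloc_nonneg standard_alloc_le_one by auto
next
  fix x :: real assume "(exp 1 - 1) * r \<le> x"
  then show "g (x / r) = 0"
    using assms by (intro standard_alloc_vanishes) (auto simp: field_simps)
qed

lemma alloc_profile_integrable_on_interval:
  assumes "alloc_profile h M" "0 \<le> a"
  shows "h integrable_on {a..b}"
proof -
  have "mono_on {a..b} (\<lambda>x. - h x)"
    using assms by (intro mono_onI) (auto simp: alloc_profile_def)
  then have "(\<lambda>x. - h x) integrable_on {a..b}" by (rule integrable_on_mono_on)
  then show ?thesis by (simp add: integrable_neg_iff)
qed

lemma alloc_profile_has_integral:
  assumes "alloc_profile h M" "0 \<le> a"
  shows "(h has_integral integral {a..max a M} h) {a..}"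
proof -
  let ?b = "max a M"
  let ?h = "\<lambda>t. if t \<in> {a..?b} then h t else 0"
  have "(h has_integral integral {a..?b} h) {a..?b}"
    by (rule integrable_integral[OF alloc_profile_integrable_on_interval[OF assms]])
  then have "(?h has_integral integral {a..?b} h) {a..?b}"
    by (rule has_integral_eq[rotated]) auto
  then have "(?h has_integral integral {a..?b} h) {a..}"
    by (rule has_integral_on_superset) auto
  then show ?thesis
    by (rule has_integral_eq[rotated]) (use assms in \<open>auto simp: alloc_profile_def\<close>)
qed

lemma
  assumes "alloc_profile h M" "0 \<le> a"
  shows alloc_profile_integrable: "h integrable_on {a..}"
    and alloc_profile_integral_eq: "integral {a..} h = integral {a..max a M} h"
  using alloc_profile_has_integral[OF assms] by (rule has_integral_integrable, rule integral_unique)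

lemma alloc_profile_integral_nonneg:
  assumes "alloc_profile h M" "0 \<le> a"
  shows "0 \<le> integral {a..} h"
  using assms alloc_profile_integrable[OF assms]
  by (intro integral_nonneg) (auto simp: alloc_profile_def)

lemma alloc_profile_integral_le:
  assumes "alloc_profile h M" "0 \<le> a"
  shows "integral {a..} h \<le> M"
proof -
  have "integral {a..max a M} h \<le> integral {a..max a M} (\<lambda>_. 1)"
    using assms alloc_profile_integrable_on_interval[OF assms]
    by (intro integral_le) (auto simp: alloc_profile_def)
  also have "\<dots> = max a M - a" by simp
  also have "\<dots> \<le> M" using assms by (auto simp: alloc_profile_def)
  finally show ?thesis using alloc_profile_integral_eq[OF assms] by simp
qed

lemma alloc_profile_integral_split:
  assumes "alloc_profile h M" "0 \<le> a" "a \<le> b"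
  shows "(b - a) * h b + integral {b..} h \<le> integral {a..} h"
proof -
  have ib: "(h has_integral integral {b..} h) {b..}"
    using assms by (intro integrable_integral alloc_profile_integrable) auto
  have iab: "(h has_integral integral {a..b} h) {a..b}"
    by (rule integrable_integral[OF alloc_profile_integrable_on_interval[OF assms(1,2)]])
  have "negligible ({a..b} \<inter> {b..})"
    by (rule negligible_subset[OF negligible_sing[of b]]) auto
  then have "(h has_integral (integral {a..b} h + integral {b..} h)) ({a..b} \<union> {b..})"
    by (rule has_integral_Un[OF iab ib])
  moreover have "{a..b} \<union> {b..} = {a..}" using assms by auto
  ultimately have eq: "integral {a..} h = integral {a..b} h + integral {b..} h"
    by (simp add: integral_unique)
  have "integral {a..b} (\<lambda>_. h b) \<le> integral {a..b} h"
    using assms alloc_profile_integrable_on_interval[OF assms(1,2)]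
    by (intro integral_le) (auto simp: alloc_profile_def)
  then show ?thesis using eq assms by simp
qed

lemma alloc_profile_integral_mono:
  assumes "alloc_profile h1 M1" "alloc_profile h2 M2" "0 \<le> a" "\<And>x. a \<le> x \<Longrightarrow> h1 x \<le> h2 x"
  shows "integral {a..} h1 \<le> integral {a..} h2"
  using assms alloc_profile_integrable[OF assms(1,3)] alloc_profile_integrable[OF assms(2,3)]
  by (intro integral_le) auto

lemma alloc_profile_standard: "standard_alloc g \<Longrightarrow> alloc_profile g (exp 1 - 1)"
  using alloc_profile_scaled[of g 1] by simp

subsection \<open>Payments\<close>

lemma Qr_eq: "Qr g r a = a * g (a / r) + integral {a..} (scaled g r)"
  by (simp add: Qr_def scaled_def)

lemma Qr_nonneg:
  assumes "standard_alloc g" "0 < r" "0 \<le> a"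
  shows "0 \<le> Qr g r a"
  using assms standard_alloc_nonneg[OF assms(1), of "a / r"]
    alloc_profile_integral_nonneg[OF alloc_profile_scaled[OF assms(1,2)] assms(3)]
  by (simp add: Qr_eq)

lemma Qr_le:
  assumes "standard_alloc g" "0 < r" "0 \<le> a"
  shows "Qr g r a \<le> 2 * (exp 1 - 1) * r"
proof -
  have "a * g (a / r) \<le> (exp 1 - 1) * r"
  proof (cases "exp 1 - 1 \<le> a / r")
    case True
    then show ?thesis using standard_alloc_vanishes[OF assms(1) True] assms by simp
  next
    case False
    then have "a < (exp 1 - 1) * r" using assms by (simp add: field_simps)
    moreover have "0 \<le> g (a / r)" "g (a / r) \<le> 1"
      using assms standard_alloc_nonneg standard_alloc_le_one by auto
    ultimately show ?thesis using assms by (smt (verit) mult_left_le)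
  qed
  moreover have "integral {a..} (scaled g r) \<le> (exp 1 - 1) * r"
    using alloc_profile_integral_le[OF alloc_profile_scaled[OF assms(1,2)] assms(3)] .
  ultimately show ?thesis by (simp add: Qr_eq algebra_simps)
qed

lemma Qr_le_Qr_zero:
  assumes "standard_alloc g" "0 < r" "0 \<le> a"
  shows "Qr g r a \<le> Qr g r 0"
  using alloc_profile_integral_split[OF alloc_profile_scaled[OF assms(1,2)], of 0 a] assms
  by (simp add: Qr_eq scaled_def)

lemma Qr_one_le:
  assumes "standard_alloc g" "1 \<le> r" "0 \<le> a"
  shows "Qr g 1 a \<le> Qr g r a"
proof -
  have r: "0 < r" using assms by simp
  have scaled_le: "g x \<le> g (x / r)" if "0 \<le> x" for x
    by (rule standard_alloc_antimono[OF assms(1)])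
      (use assms that in \<open>auto simp: divide_le_eq mult_le_cancel_left1\<close>)
  have "a * g a \<le> a * g (a / r)"
    using scaled_le assms by (simp add: mult_left_mono)
  moreover have "integral {a..} g \<le> integral {a..} (scaled g r)"
    using scaled_le assms
    by (intro alloc_profile_integral_mono[OF alloc_profile_standard alloc_profile_scaled[OF _ r]])
      (auto simp: scaled_def)
  ultimately show ?thesis by (simp add: Qr_eq)
qed

lemma
  assumes "standard_alloc g" "0 < r" "0 < u" "0 \<le> x"
  shows Pay_le: "Pay g r u x \<le> u * (2 * (exp 1 - 1) * r)"
    and Pay_le_Pay_zero: "Pay g r u x \<le> Pay g r u 0"
  unfolding Pay_def using assms Qr_le[of g r "x / u"] Qr_le_Qr_zero[of g r "x / u"]
  by (auto intro: mult_left_mono)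

lemma Pay_one_le: "standard_alloc g \<Longrightarrow> 1 \<le> r \<Longrightarrow> 0 < u \<Longrightarrow> 0 \<le> x \<Longrightarrow> Pay g 1 u x \<le> Pay g r u x"
  unfolding Pay_def using Qr_one_le[of g r "x / u"] by (intro mult_left_mono) auto

subsection \<open>The stopping rate\<close>

lemma total_pay_le:
  assumes "standard_alloc g" "\<forall>i\<in>S. 0 < u i \<and> 0 \<le> c i" "0 < r"
  shows "total_pay g S u c r \<le> 2 * (exp 1 - 1) * r * sum u S"
proof -
  have "total_pay g S u c r \<le> (\<Sum>i\<in>S. u i * (2 * (exp 1 - 1) * r))"
    unfolding total_pay_def using assms by (intro sum_mono Pay_le) auto
  also have "\<dots> = 2 * (exp 1 - 1) * r * sum u S" by (simp add: sum_distrib_right mult.commute)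
  finally show ?thesis .
qed

lemma exists_rate_within_budget:
  assumes "standard_alloc g" "\<forall>i\<in>S. 0 < u i \<and> 0 \<le> c i" "0 < B"
  obtains r0 where "0 < r0" "total_pay g S u c r0 \<le> B"
proof -
  define k where "k = 2 * (exp 1 - 1) * sum u S + 1"
  have k: "1 \<le> k" using assms by (simp add: k_def sum_nonneg less_imp_le)
  have r0: "0 < B / k" using assms k by simp
  have "total_pay g S u c (B / k) \<le> 2 * (exp 1 - 1) * (B / k) * sum u S"
    by (rule total_pay_le[OF assms(1,2) r0])
  also have "\<dots> = B / k * (k - 1)" by (simp add: k_def algebra_simps)
  also have "\<dots> \<le> B / k * k" using r0 by (intro mult_left_mono) auto
  also have "\<dots> = B" using k by simp
  finally show ?thesis using that r0 by blast
qed

lemma stop_rate_pos: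
  assumes "standard_alloc g" "\<forall>i\<in>S. 0 < u i \<and> 0 \<le> c i" "0 < B"
  shows "0 < stop_rate g S u c B"
proof -
  obtain r0 where r0: "0 < r0" "total_pay g S u c r0 \<le> B"
    using exists_rate_within_budget[OF assms] .
  let ?R = "{r. 0 < r \<and> total_pay g S u c r \<le> B}"
  show ?thesis
  proof (cases "bdd_above ?R")
    case True
    have "r0 \<le> Sup ?R" using r0 True by (intro cSup_upper) auto
    then show ?thesis using True r0 by (simp add: stop_rate_def Let_def)
  qed (simp add: stop_rate_def Let_def)
qed

lemma stop_rate_le_one:
  assumes "standard_alloc g" "\<forall>i\<in>S. 0 < u i \<and> 0 \<le> c i" "0 < B"
    and exceeds: "\<And>r. 1 \<le> r \<Longrightarrow> B < total_pay g S u c r"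
  shows "stop_rate g S u c B \<le> 1"
proof -
  obtain r0 where r0: "0 < r0" "total_pay g S u c r0 \<le> B"
    using exists_rate_within_budget[OF assms(1-3)] .
  let ?R = "{r. 0 < r \<and> total_pay g S u c r \<le> B}"
  have le1: "r \<le> 1" if "r \<in> ?R" for r
    using that exceeds[of r] by (cases "1 \<le> r") auto
  then have "bdd_above ?R" by (intro bdd_aboveI[of _ 1]) blast
  moreover have "Sup ?R \<le> 1" using r0 le1 by (intro cSup_least) auto
  ultimately show ?thesis by (simp add: stop_rate_def Let_def)
qed

lemma stop_rate_update_zero_pos:
  assumes "standard_alloc g" "valid_instance S u c B"
  shows "0 < stop_rate g S u (c(i := 0)) B"
  using assms by (intro stop_rate_pos) (auto simp: valid_instance_def)

lemma truthful_util_ge: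
  assumes g: "standard_alloc g" and v: "valid_instance S u c B" and r: "0 < r"
    and rates: "\<And>i. i \<in> S \<Longrightarrow> r \<le> stop_rate g S u (c(i := 0)) B"
  shows "(\<Sum>i\<in>S. u i * g (c i / u i / r)) \<le> truthful_util g S u c B"
  unfolding truthful_util_def truthful_alloc_def scaled_def
proof (intro sum_mono mult_left_mono)
  fix i assume i: "i \<in> S"
  have ci: "0 \<le> c i / u i" using v i by (auto simp: valid_instance_def)
  have ri: "0 < stop_rate g S u (c(i := 0)) B" by (rule stop_rate_update_zero_pos[OF g v])
  have "0 \<le> c i / u i / stop_rate g S u (c(i := 0)) B" using ci ri by (rule divide_nonneg_pos)
  moreover have "c i / u i / stop_rate g S u (c(i := 0)) B \<le> c i / u i / r"
    using ci ri rates[OF i] r by (intro divide_left_mono) auto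
  ultimately show "g (c i / u i / r) \<le> g (c i / u i / stop_rate g S u (c(i := 0)) B)"
    by (rule standard_alloc_antimono[OF g])
  show "0 \<le> u i" using v i by (auto simp: valid_instance_def less_imp_le)
qed

lemma truthful_util_nonneg:
  assumes g: "standard_alloc g" and v: "valid_instance S u c B"
  shows "0 \<le> truthful_util g S u c B"
  unfolding truthful_util_def truthful_alloc_def scaled_def
proof (intro sum_nonneg mult_nonneg_nonneg)
  fix i assume i: "i \<in> S"
  have "0 \<le> c i / u i / stop_rate g S u (c(i := 0)) B"
    using v i stop_rate_update_zero_pos[OF g v, of i] by (auto simp: valid_instance_def)
  then show "0 \<le> g (c i / u i / stop_rate g S u (c(i := 0)) B)"
    by (rule standard_alloc_nonneg[OF g])
  show "0 \<le> u i" using v i by (auto simp: valid_instance_def less_imp_le)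
qed

text \<open>Zeroing a cost only raises the payments, so every rate used by \<open>Truthful(g)\<close> is then at most 1.\<close>

lemma truthful_alloc_le:
  assumes g: "standard_alloc g" and v: "valid_instance S u c B" and i: "i \<in> S"
    and exceeds: "B < total_pay g S u c 1"
  shows "truthful_alloc g S u c B i \<le> g (c i / u i)"
proof -
  let ?c = "c(i := 0)"
  have uc: "\<forall>j\<in>S. 0 < u j \<and> 0 \<le> ?c j" and B: "0 < B" using v by (auto simp: valid_instance_def)
  have "B < total_pay g S u ?c r" if r: "1 \<le> r" for r
  proof -
    have "total_pay g S u c 1 \<le> total_pay g S u ?c r"
      unfolding total_pay_def
    proof (rule sum_mono)
      fix j assume j: "j \<in> S"
      have "Pay g 1 (u j) (c j) \<le> Pay g r (u j) (c j)"
        using uc j v r by (intro Pay_one_le[OF g]) (auto simp: valid_instance_def)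
      also have "\<dots> \<le> Pay g r (u j) (?c j)"
        using uc j v r Pay_le_Pay_zero[OF g, of r "u j" "c j"] by (auto simp: valid_instance_def)
      finally show "Pay g 1 (u j) (c j) \<le> Pay g r (u j) (?c j)" .
    qed
    then show ?thesis using exceeds by simp
  qed
  then have rate_le: "stop_rate g S u ?c B \<le> 1" by (intro stop_rate_le_one[OF g uc B])
  have rate_pos: "0 < stop_rate g S u ?c B" by (rule stop_rate_update_zero_pos[OF g v])
  have y: "0 \<le> c i / u i" using v i by (auto simp: valid_instance_def)
  have "c i / u i \<le> c i / u i / stop_rate g S u ?c B"
    by (subst pos_le_divide_eq[OF rate_pos]) (rule mult_left_le[OF rate_le y])
  with y show ?thesis
    unfolding truthful_alloc_def scaled_def by (rule standard_alloc_antimono[OF g])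
qed

subsection \<open>The fractional knapsack optimum\<close>

definition knapsack_feasible :: "nat set \<Rightarrow> (nat \<Rightarrow> real) \<Rightarrow> real \<Rightarrow> (nat \<Rightarrow> real) \<Rightarrow> bool" where
  "knapsack_feasible S c B a \<longleftrightarrow> (\<forall>i\<in>S. 0 \<le> a i \<and> a i \<le> 1) \<and> (\<Sum>i\<in>S. c i * a i) \<le> B"

lemma opt_util_eq_SUP:
  "opt_util S u c B = (SUP a\<in>{a. knapsack_feasible S c B a}. \<Sum>i\<in>S. u i * a i)"
  unfolding opt_util_def knapsack_feasible_def by (rule arg_cong[where f = Sup]) auto

lemma opt_util_ge:
  assumes v: "valid_instance S u c B" and a: "knapsack_feasible S c B a"
  shows "(\<Sum>i\<in>S. u i * a i) \<le> opt_util S u c B"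
proof -
  have "bdd_above ((\<lambda>a. \<Sum>i\<in>S. u i * a i) ` {a. knapsack_feasible S c B a})"
  proof (rule bdd_aboveI2)
    fix b assume "b \<in> {a. knapsack_feasible S c B a}"
    then show "(\<Sum>i\<in>S. u i * b i) \<le> sum u S"
      using v by (intro sum_mono) (auto simp: knapsack_feasible_def valid_instance_def intro: mult_left_le)
  qed
  then show ?thesis unfolding opt_util_eq_SUP using a by (intro cSUP_upper) auto
qed

lemma opt_util_le:
  assumes "\<And>a. knapsack_feasible S c B a \<Longrightarrow> (\<Sum>i\<in>S. u i * a i) \<le> X" "0 \<le> B"
  shows "opt_util S u c B \<le> X"
proof -
  have "knapsack_feasible S c B (\<lambda>_. 0)" using assms by (simp add: knapsack_feasible_def)
  then show ?thesis unfolding opt_util_eq_SUP using assms by (intro cSUP_least) auto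
qed

lemma opt_util_pos:
  assumes v: "valid_instance S u c B"
  shows "0 < opt_util S u c B"
proof -
  have v': "finite S" "S \<noteq> {}" "0 < B" "\<forall>i\<in>S. 0 < u i \<and> 0 \<le> c i"
    using v by (auto simp: valid_instance_def)
  have sc: "0 \<le> sum c S" using v' by (intro sum_nonneg) auto
  define t where "t = B / (B + sum c S)"
  have t: "0 < t" "t \<le> 1" using v' sc by (auto simp: t_def)
  have "(\<Sum>i\<in>S. c i * t) = t * sum c S" by (simp add: sum_distrib_left mult.commute)
  also have "\<dots> \<le> B" using v' sc by (simp add: t_def field_simps)
  finally have "knapsack_feasible S c B (\<lambda>_. t)" using t by (simp add: knapsack_feasible_def)
  then have "(\<Sum>i\<in>S. u i * t) \<le> opt_util S u c B" by (rule opt_util_ge[OF v])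
  moreover have "0 < (\<Sum>i\<in>S. u i * t)" using v' t by (intro sum_pos) auto
  ultimately show ?thesis by simp
qed

subsection \<open>The worst-case ratio and its large-market limit\<close>

definition instance_ratios :: "(real \<Rightarrow> real) \<Rightarrow> real \<Rightarrow> real set" where
  "instance_ratios f \<theta>0 = {truthful_util f S u c B / opt_util S u c B | S u c B.
       valid_instance S u c B \<and> largeness S c B \<le> \<theta>0}"

lemma worst_ratio_eq: "worst_ratio f \<theta> = Inf (instance_ratios f \<theta>)"
  by (simp add: worst_ratio_def instance_ratios_def)

lemma instance_ratios_bdd_below: "standard_alloc g \<Longrightarrow> bdd_below (instance_ratios g \<theta>)"
  unfolding instance_ratios_def
  by (rule bdd_belowI[of _ 0]) (auto intro: divide_nonneg_pos truthful_util_nonneg opt_util_pos)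

lemma one_mem_instance_ratios:
  assumes "standard_alloc g" "0 \<le> \<theta>"
  shows "1 \<in> instance_ratios g \<theta>"
proof -
  let ?S = "{0::nat}" and ?u = "\<lambda>_::nat. 1::real" and ?c = "\<lambda>_::nat. 0::real"
  have v: "valid_instance ?S ?u ?c 1" by (simp add: valid_instance_def)
  have "opt_util ?S ?u ?c 1 \<le> 1"
    by (rule opt_util_le) (auto simp: knapsack_feasible_def)
  moreover have "1 \<le> opt_util ?S ?u ?c 1"
    using opt_util_ge[OF v, of "\<lambda>_. 1"] by (simp add: knapsack_feasible_def)
  moreover have "truthful_util g ?S ?u ?c 1 = 1"
    using standard_alloc_at_zero[OF assms(1)]
    by (simp add: truthful_util_def truthful_alloc_def scaled_def)
  ultimately have "truthful_util g ?S ?u ?c 1 / opt_util ?S ?u ?c 1 = 1" by simp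
  moreover have "largeness ?S ?c 1 \<le> \<theta>" using assms by (simp add: largeness_def)
  ultimately show ?thesis unfolding instance_ratios_def using v by force
qed

lemma worst_ratio_le:
  assumes "standard_alloc g" "valid_instance S u c B" "largeness S c B \<le> \<theta>"
  shows "worst_ratio g \<theta> \<le> truthful_util g S u c B / opt_util S u c B"
  unfolding worst_ratio_eq
  by (rule cInf_lower[OF _ instance_ratios_bdd_below[OF assms(1)]])
    (use assms in \<open>auto simp: instance_ratios_def\<close>)

lemma worst_ratio_ge:
  assumes "standard_alloc g" "0 \<le> \<theta>"
    and "\<And>S u c B. valid_instance S u c B \<Longrightarrow> largeness S c B \<le> \<theta> \<Longrightarrow>
           x \<le> truthful_util g S u c B / opt_util S u c B"
  shows "x \<le> worst_ratio g \<theta>"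
  unfolding worst_ratio_eq
  using one_mem_instance_ratios[OF assms(1,2)] assms(3)
  by (intro cInf_greatest) (auto simp: instance_ratios_def)

lemma worst_ratio_le_one: "standard_alloc g \<Longrightarrow> 0 \<le> \<theta> \<Longrightarrow> worst_ratio g \<theta> \<le> 1"
  unfolding worst_ratio_eq by (rule cInf_lower[OF one_mem_instance_ratios instance_ratios_bdd_below])

lemma worst_ratio_antimono:
  assumes "standard_alloc g" "0 \<le> \<theta>1" "\<theta>1 \<le> \<theta>2"
  shows "worst_ratio g \<theta>2 \<le> worst_ratio g \<theta>1"
  unfolding worst_ratio_eq
proof (rule cInf_superset_mono)
  show "instance_ratios g \<theta>1 \<noteq> {}" using one_mem_instance_ratios[OF assms(1,2)] by blast
  show "instance_ratios g \<theta>1 \<subseteq> instance_ratios g \<theta>2"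
    using assms(3) unfolding instance_ratios_def by force
qed (rule instance_ratios_bdd_below[OF assms(1)])

lemma worst_ratio_bdd_above: "standard_alloc g \<Longrightarrow> bdd_above (worst_ratio g ` {0<..})"
  by (rule bdd_aboveI[of _ 1]) (auto intro: worst_ratio_le_one)

text \<open>The worst ratio is non-increasing in the largeness bound, so its limit at \<open>0\<^sup>+\<close> is its supremum.\<close>

lemma lm_ratio_is_SUP:
  assumes g: "standard_alloc g"
  shows "lm_ratio_is g (SUP \<theta>\<in>{0<..}. worst_ratio g \<theta>)"
  unfolding lm_ratio_is_def
proof (rule order_tendstoI)
  fix a assume "a < (SUP \<theta>\<in>{0<..}. worst_ratio g \<theta>)"
  then obtain \<theta>1 where \<theta>1: "0 < \<theta>1" "a < worst_ratio g \<theta>1"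
    using less_cSUP_iff[OF _ worst_ratio_bdd_above[OF g]] by auto
  have "a < worst_ratio g y" if "0 < y" "y < \<theta>1" for y
    using \<theta>1 that worst_ratio_antimono[OF g, of y \<theta>1] by auto
  then show "\<forall>\<^sub>F x in at_right 0. a < worst_ratio g x"
    unfolding eventually_at_right_field using \<theta>1 by blast
next
  fix a assume "(SUP \<theta>\<in>{0<..}. worst_ratio g \<theta>) < a"
  then have "worst_ratio g x < a" if "0 < x" for x
    using that cSUP_upper[OF _ worst_ratio_bdd_above[OF g], of x] by force
  then show "\<forall>\<^sub>F x in at_right 0. worst_ratio g x < a"
    unfolding eventually_at_right_field by (intro exI[of _ 1]) auto
qed

subsection \<open>The logarithmic rule\<close>

lemma standard_alloc_ln_rule: "standard_alloc ln_rule"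
  unfolding standard_alloc_def
proof (intro conjI allI impI)
  fix x y :: real assume xy: "0 \<le> x" "x \<le> y"
  show "ln_rule y \<le> ln_rule x"
  proof (cases "y \<le> exp 1 - 1")
    case False
    then show ?thesis using xy by (auto simp: ln_rule_def)
  qed (use xy in \<open>simp add: ln_rule_def\<close>)
next
  fix x :: real assume x: "0 \<le> x"
  show "0 \<le> ln_rule x" using x by (auto simp: ln_rule_def)
  show "ln_rule x \<le> 1"
  proof (cases "x \<le> exp 1 - 1")
    case True
    have "ln (exp 1 - x) \<le> ln (exp 1)" using x True by (subst ln_le_cancel_iff) auto
    then show ?thesis using True x by (simp add: ln_rule_def)
  qed (simp add: ln_rule_def)
qed (auto simp: ln_rule_def)

definition trunc_e :: "real \<Rightarrow> real" where
  "trunc_e y = min y (exp 1 - 1)"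

text \<open>The tail integral and the payment function \<open>Q\<^sub>1\<close> of the logarithmic rule, in closed form.\<close>

definition tail_ln :: "real \<Rightarrow> real" where
  "tail_ln y = (exp 1 - trunc_e y) * ln (exp 1 - trunc_e y) - (exp 1 - trunc_e y) + 1"

definition Q_ln :: "real \<Rightarrow> real" where
  "Q_ln y = 1 + trunc_e y - exp 1 + exp 1 * ln (exp 1 - trunc_e y)"

lemma trunc_e_bounds: "0 \<le> y \<Longrightarrow> 0 \<le> trunc_e y \<and> trunc_e y \<le> exp 1 - 1"
  by (auto simp: trunc_e_def min_def)

lemma ln_rule_has_tail_integral:
  assumes a: "0 \<le> a" and r: "0 < r"
  shows "((\<lambda>t. ln_rule (t / r)) has_integral (r * tail_ln (a / r))) {a..}"
proof (cases "a \<le> (exp 1 - 1) * r")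
  case True
  let ?b = "(exp 1 - 1) * r"
  let ?F = "\<lambda>t. - r * ((exp 1 - t / r) * ln (exp 1 - t / r) - (exp 1 - t / r))"
  have der: "(?F has_vector_derivative ln (exp 1 - t / r)) (at t within {a..?b})"
    if "t \<in> {a..?b}" for t
  proof -
    have pos: "0 < exp 1 - t / r" using that r by (auto simp: field_simps)
    have "(?F has_real_derivative - r * (- (1 / r) * ln (exp 1 - t / r)
        + (exp 1 - t / r) * (- (1 / r) / (exp 1 - t / r)) - - (1 / r))) (at t within {a..?b})"
      using pos by (auto intro!: derivative_eq_intros)
    moreover have "- r * (- (1 / r) * ln (exp 1 - t / r) + (exp 1 - t / r) * (- (1 / r) / (exp 1 - t / r))
        - - (1 / r)) = ln (exp 1 - t / r)"
      using r pos by (simp add: field_simps)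
    ultimately show ?thesis by (simp add: has_real_derivative_iff_has_vector_derivative)
  qed
  have "?F ?b - ?F a = r * tail_ln (a / r)"
    using True r by (simp add: tail_ln_def trunc_e_def field_simps min_def)
  then have "((\<lambda>t. ln (exp 1 - t / r)) has_integral r * tail_ln (a / r)) {a..?b}"
    using fundamental_theorem_of_calculus[OF True der] by simp
  then have "((\<lambda>t. if t \<in> {a..?b} then ln_rule (t / r) else 0) has_integral r * tail_ln (a / r)) {a..?b}"
    by (rule has_integral_eq[rotated]) (use a r in \<open>auto simp: ln_rule_def field_simps\<close>)
  then have "((\<lambda>t. if t \<in> {a..?b} then ln_rule (t / r) else 0) has_integral r * tail_ln (a / r)) {a..}"
    by (rule has_integral_on_superset) auto
  then show ?thesis
    by (rule has_integral_eq[rotated]) (use r in \<open>auto simp: ln_rule_def field_simps\<close>)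
next
  case False
  then have "tail_ln (a / r) = 0" using r by (simp add: tail_ln_def trunc_e_def min_def field_simps)
  moreover have "((\<lambda>t. ln_rule (t / r)) has_integral 0) {a..}"
    by (rule has_integral_eq[of _ "\<lambda>t. 0"]) (use False r in \<open>auto simp: ln_rule_def field_simps\<close>)
  ultimately show ?thesis by simp
qed

lemma Q_ln_eq: "0 \<le> y \<Longrightarrow> Q_ln y = y * ln_rule y + tail_ln y"
  by (auto simp: ln_rule_def tail_ln_def Q_ln_def trunc_e_def min_def field_simps)

lemma Pay_ln_rule:
  assumes u: "0 < u" and r: "0 < r" and x: "0 \<le> x"
  shows "Pay ln_rule r u x = u * r * Q_ln (x / (u * r))"
proof -
  have "integral {x / u..} (scaled ln_rule r) = r * tail_ln (x / u / r)"
    unfolding scaled_def using ln_rule_has_tail_integral[of "x / u" r] u r x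
    by (simp add: integral_unique)
  then have "Pay ln_rule r u x = u * (x / u * ln_rule (x / u / r) + r * tail_ln (x / u / r))"
    by (simp add: Pay_def Qr_def scaled_def)
  also have "\<dots> = u * r * (x / (u * r) * ln_rule (x / (u * r)) + tail_ln (x / (u * r)))"
    using u r by (simp add: field_simps)
  also have "\<dots> = u * r * Q_ln (x / (u * r))"
    using u r x by (simp add: Q_ln_eq)
  finally show ?thesis .
qed

lemma Q_ln_0 [simp]: "Q_ln 0 = 1"
  by (simp add: Q_ln_def trunc_e_def)

lemma Q_ln_nonneg:
  assumes "0 \<le> y"
  shows "0 \<le> Q_ln y"
proof -
  define z where "z = exp 1 - trunc_e y"
  have z: "1 \<le> z" "z \<le> exp 1" using trunc_e_bounds[OF assms] by (auto simp: z_def)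
  have "ln (1 / z) \<le> 1 / z - 1" using z by (intro ln_le_minus_one) auto
  then have "exp 1 * (1 - 1 / z) \<le> exp 1 * ln z" using z by (intro mult_left_mono) (auto simp: ln_div)
  moreover have "z - 1 \<le> exp 1 * (1 - 1 / z)"
    using z mult_left_mono[of z "exp 1" "z - 1"] by (simp add: field_simps)
  moreover have "Q_ln y = 1 - z + exp 1 * ln z" by (simp add: Q_ln_def z_def)
  ultimately show ?thesis by linarith
qed

lemma Q_ln_le_one:
  assumes "0 \<le> y"
  shows "Q_ln y \<le> 1"
proof -
  define z where "z = exp 1 - trunc_e y"
  have z: "1 \<le> z" "z \<le> exp 1" using trunc_e_bounds[OF assms] by (auto simp: z_def)
  have "ln (z / exp 1) \<le> z / exp 1 - 1" using z by (intro ln_le_minus_one) auto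
  then have "exp 1 * ln z \<le> z" using z by (simp add: ln_div field_simps)
  then show ?thesis by (simp add: Q_ln_def z_def)
qed

lemma one_minus_Q_ln_le:
  assumes y: "0 \<le> y"
  shows "1 - Q_ln y \<le> y"
proof (cases "y \<le> 1")
  case True
  have e2: "2 \<le> exp (1::real)" using exp_ge_add_one_self[of 1] by simp
  then have t: "trunc_e y = y" using True by (simp add: trunc_e_def)
  have pos: "0 < exp 1 - y" using True e2 by simp
  have "ln (exp 1 / (exp 1 - y)) \<le> exp 1 / (exp 1 - y) - 1" using pos by (intro ln_le_minus_one) simp
  then have "exp 1 * (1 - ln (exp 1 - y)) \<le> exp 1 * (exp 1 / (exp 1 - y) - 1)"
    using pos by (simp add: ln_div)
  moreover have "exp 1 * (exp 1 / (exp 1 - y) - 1) \<le> 2 * y"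
  proof -
    have "exp 1 * exp 1 \<le> (exp 1 + 2 * y) * (exp 1 - y)"
      using mult_nonneg_nonneg[of y "exp 1 - 2 * y"] True e2 y by (simp add: algebra_simps)
    then show ?thesis using pos by (simp add: field_simps)
  qed
  ultimately show ?thesis by (simp add: Q_ln_def t algebra_simps)
qed (use Q_ln_nonneg[OF y] in simp)

text \<open>The pointwise inequality behind the primal-dual analysis of the logarithmic rule: for every
  fraction \<open>\<alpha>\<close> of an item with normalised cost \<open>y\<close>, the dual price \<open>(Q(y) - y \<alpha>) / e\<close> pays for
  the missing part of \<open>(1 - 1/e) \<alpha>\<close>.\<close>

lemma ln_rule_dual_ineq:
  assumes y: "0 \<le> y" and \<alpha>: "0 \<le> \<alpha>" "\<alpha> \<le> 1"
  shows "(1 - 1 / exp 1) * \<alpha> + (Q_ln y - y * \<alpha>) / exp 1 \<le> ln_rule y"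
proof (cases "y \<le> exp 1 - 1")
  case True
  have "(1 - 1 / exp 1) * \<alpha> + (Q_ln y - y * \<alpha>) / exp 1 - ln_rule y
      = (1 + y - exp 1) * (1 - \<alpha>) / exp 1"
    using True y by (simp add: Q_ln_def ln_rule_def trunc_e_def field_simps)
  moreover have "(1 + y - exp 1) * (1 - \<alpha>) / exp 1 \<le> 0"
    using True \<alpha> by (intro divide_nonpos_pos mult_nonpos_nonneg) auto
  ultimately show ?thesis by linarith
next
  case False
  then have "(1 - 1 / exp 1) * \<alpha> + (Q_ln y - y * \<alpha>) / exp 1 = \<alpha> * (exp 1 - 1 - y) / exp 1"
    by (simp add: Q_ln_def trunc_e_def field_simps)
  moreover have "\<alpha> * (exp 1 - 1 - y) \<le> 0" using False \<alpha> by (intro mult_nonneg_nonpos) auto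
  ultimately show ?thesis using False by (simp add: ln_rule_def divide_nonpos_pos)
qed

lemma Q_ln_le: "0 \<le> y \<Longrightarrow> Q_ln y \<le> exp 1 * ln_rule y"
  using ln_rule_dual_ineq[of y 0] by (simp add: field_simps)

lemma isCont_Q_ln: "isCont Q_ln y"
proof -
  have "1 \<le> exp 1 - trunc_e y" by (simp add: trunc_e_def)
  then show ?thesis unfolding Q_ln_def[abs_def] trunc_e_def by (auto intro!: continuous_intros)
qed

definition ln_total_pay :: "nat set \<Rightarrow> (nat \<Rightarrow> real) \<Rightarrow> (nat \<Rightarrow> real) \<Rightarrow> real \<Rightarrow> real" where
  "ln_total_pay S u c r = (\<Sum>i\<in>S. u i * r * Q_ln (c i / (u i * r)))"

lemma total_pay_ln_rule:
  assumes "\<forall>i\<in>S. 0 < u i \<and> 0 \<le> c i" "0 < r"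
  shows "total_pay ln_rule S u c r = ln_total_pay S u c r"
  unfolding total_pay_def ln_total_pay_def using assms by (intro sum.cong refl Pay_ln_rule) auto

lemma isCont_ln_total_pay:
  assumes "0 < r" "\<forall>i\<in>S. 0 < u i"
  shows "isCont (ln_total_pay S u c) r"
  unfolding ln_total_pay_def[abs_def]
proof (intro continuous_intros)
  fix i assume "i \<in> S"
  then have "isCont (\<lambda>r. c i / (u i * r)) r" using assms by (intro continuous_intros) auto
  then show "isCont (\<lambda>r. Q_ln (c i / (u i * r))) r" by (rule isCont_o2[OF _ isCont_Q_ln])
qed

lemma ln_total_pay_le:
  assumes "\<forall>i\<in>S. 0 < u i \<and> 0 \<le> c i" "0 < r"
  shows "ln_total_pay S u c r \<le> r * sum u S"
proof -
  have "ln_total_pay S u c r \<le> (\<Sum>i\<in>S. u i * r)"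
    unfolding ln_total_pay_def using assms
    by (intro sum_mono) (auto intro!: mult_left_le Q_ln_le_one)
  then show ?thesis by (simp add: sum_distrib_left mult.commute)
qed

lemma ln_total_pay_le_utility:
  assumes "\<forall>i\<in>S. 0 < u i \<and> 0 \<le> c i" "0 < r"
  shows "ln_total_pay S u c r \<le> exp 1 * r * (\<Sum>i\<in>S. u i * ln_rule (c i / (u i * r)))"
proof -
  have "ln_total_pay S u c r \<le> (\<Sum>i\<in>S. u i * r * (exp 1 * ln_rule (c i / (u i * r))))"
    unfolding ln_total_pay_def using assms by (intro sum_mono mult_left_mono Q_ln_le) auto
  then show ?thesis by (simp add: sum_distrib_left algebra_simps)
qed

lemma ln_total_pay_update_zero:
  assumes "finite S" "j \<in> S"
  shows "ln_total_pay S u (c(j := 0)) r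
           = ln_total_pay S u c r + u j * r * (1 - Q_ln (c j / (u j * r)))"
proof -
  have "(\<Sum>i\<in>S - {j}. u i * r * Q_ln ((c(j := 0)) i / (u i * r)))
      = (\<Sum>i\<in>S - {j}. u i * r * Q_ln (c i / (u i * r)))"
    by (intro sum.cong) auto
  then show ?thesis unfolding ln_total_pay_def using assms by (simp add: sum.remove algebra_simps)
qed

lemma ln_total_pay_ge_zero_cost:
  assumes "finite S" "j \<in> S" "c j = 0" "\<forall>i\<in>S. 0 < u i \<and> 0 \<le> c i" "0 < r"
  shows "u j * r \<le> ln_total_pay S u c r"
proof -
  have "ln_total_pay S u c r = u j * r + (\<Sum>i\<in>S - {j}. u i * r * Q_ln (c i / (u i * r)))"
    unfolding ln_total_pay_def using assms by (simp add: sum.remove)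
  moreover have "0 \<le> (\<Sum>i\<in>S - {j}. u i * r * Q_ln (c i / (u i * r)))"
    using assms by (intro sum_nonneg mult_nonneg_nonneg Q_ln_nonneg) (auto simp: less_imp_le)
  ultimately show ?thesis by simp
qed

lemma isCont_Sup_sublevel:
  fixes f :: "real \<Rightarrow> real" and B :: real
  defines "R \<equiv> {r. 0 < r \<and> f r \<le> B}"
  assumes bdd: "bdd_above R" and r0: "r0 \<in> R" and cont: "isCont f (Sup R)"
  shows "f (Sup R) = B"
proof (rule antisym)
  obtain x where x: "\<And>n. x n \<in> R" "x \<longlonglongrightarrow> Sup R"
    using closure_contains_Sup[OF _ bdd] r0 unfolding closure_sequential by blast
  have "(\<lambda>n. f (x n)) \<longlonglongrightarrow> f (Sup R)" by (rule isCont_tendsto_compose[OF cont x(2)])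
  then show "f (Sup R) \<le> B"
    by (rule tendsto_upperbound) (use x(1) in \<open>auto simp: R_def intro!: always_eventually\<close>)
next
  have pos: "0 < Sup R" using r0 cSup_upper[OF r0 bdd] by (auto simp: R_def)
  have above: "B < f y" if y: "Sup R < y" for y
  proof (rule ccontr)
    assume "\<not> B < f y"
    then have "y \<in> R" using y pos by (simp add: R_def)
    then show False using cSup_upper[OF _ bdd] y by fastforce
  qed
  have "(f \<longlongrightarrow> f (Sup R)) (at_right (Sup R))"
    using cont unfolding isCont_def by (rule filterlim_mono) (auto simp: at_le)
  then show "B \<le> f (Sup R)"
    by (rule tendsto_lowerbound)
      (auto simp: eventually_at_right_field above less_imp_le intro!: exI[of _ "Sup R + 1"])
qed

text \<open>With a seller of zero cost the total payment of the logarithmic rule grows at least linearly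
  in the rate, so the stopping rate exists and, by continuity, exhausts the budget exactly.\<close>

lemma stop_rate_ln_rule:
  assumes S: "finite S" "j \<in> S" and cj: "c j = 0" and B: "0 < B"
    and uc: "\<forall>i\<in>S. 0 < u i \<and> 0 \<le> c i"
  shows "0 < stop_rate ln_rule S u c B" "ln_total_pay S u c (stop_rate ln_rule S u c B) = B"
proof -
  define R where "R = {r. 0 < r \<and> ln_total_pay S u c r \<le> B}"
  have uj: "0 < u j" using uc S by auto
  have bdd: "bdd_above R"
  proof (rule bdd_aboveI)
    fix r assume "r \<in> R"
    then have "u j * r \<le> B" using ln_total_pay_ge_zero_cost[OF S cj uc, of r] by (auto simp: R_def)
    then show "r \<le> B / u j" using uj by (simp add: field_simps mult.commute)
  qed
  have "0 < sum u S" using uc S by (intro sum_pos2[OF S]) (auto simp: less_imp_le)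
  then have r0: "B / sum u S \<in> R"
    using ln_total_pay_le[OF uc, of "B / sum u S"] B by (simp add: R_def)
  have "{r. 0 < r \<and> total_pay ln_rule S u c r \<le> B} = R"
    using total_pay_ln_rule[OF uc] by (auto simp: R_def)
  then have rate: "stop_rate ln_rule S u c B = Sup R" using bdd by (simp add: stop_rate_def Let_def)
  have pos: "0 < Sup R" using cSup_upper[OF r0 bdd] r0 by (auto simp: R_def)
  then show "0 < stop_rate ln_rule S u c B" using rate by simp
  show "ln_total_pay S u c (stop_rate ln_rule S u c B) = B"
    unfolding rate R_def
    by (rule isCont_Sup_sublevel[where f = "ln_total_pay S u c"])
      (use bdd r0 isCont_ln_total_pay[OF pos] uc in \<open>auto simp: R_def\<close>)
qed

lemma ln_rule_weak_duality:
  assumes uc: "\<forall>i\<in>S. 0 < u i \<and> 0 \<le> c i" and r: "0 < r" and \<alpha>: "\<forall>i\<in>S. 0 \<le> \<alpha> i \<and> \<alpha> i \<le> 1"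
  shows "(1 - 1 / exp 1) * (\<Sum>i\<in>S. u i * \<alpha> i)
           \<le> (\<Sum>i\<in>S. u i * ln_rule (c i / (u i * r)))
              + ((\<Sum>i\<in>S. c i * \<alpha> i) - ln_total_pay S u c r) / (exp 1 * r)"
proof -
  have "(1 - 1 / exp 1) * (u i * \<alpha> i) + (u i * r * Q_ln (c i / (u i * r)) - c i * \<alpha> i) / (exp 1 * r)
        \<le> u i * ln_rule (c i / (u i * r))" if i: "i \<in> S" for i
  proof -
    define y where "y = c i / (u i * r)"
    have ui: "0 < u i" and y: "0 \<le> y" using uc i r by (auto simp: y_def)
    have "u i * ((1 - 1 / exp 1) * \<alpha> i + (Q_ln y - y * \<alpha> i) / exp 1) \<le> u i * ln_rule y"
      using ui y \<alpha> i by (intro mult_left_mono ln_rule_dual_ineq) auto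
    moreover have "u i * ((1 - 1 / exp 1) * \<alpha> i + (Q_ln y - y * \<alpha> i) / exp 1)
        = (1 - 1 / exp 1) * (u i * \<alpha> i) + (u i * r * Q_ln y - c i * \<alpha> i) / (exp 1 * r)"
      using ui r by (simp add: y_def field_simps)
    ultimately show ?thesis by (simp add: y_def)
  qed
  then have "(\<Sum>i\<in>S. (1 - 1 / exp 1) * (u i * \<alpha> i)
        + (u i * r * Q_ln (c i / (u i * r)) - c i * \<alpha> i) / (exp 1 * r))
      \<le> (\<Sum>i\<in>S. u i * ln_rule (c i / (u i * r)))"
    by (rule sum_mono)
  moreover have "(\<Sum>i\<in>S. (1 - 1 / exp 1) * (u i * \<alpha> i)
        + (u i * r * Q_ln (c i / (u i * r)) - c i * \<alpha> i) / (exp 1 * r))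
      = (1 - 1 / exp 1) * (\<Sum>i\<in>S. u i * \<alpha> i)
        + (ln_total_pay S u c r - (\<Sum>i\<in>S. c i * \<alpha> i)) / (exp 1 * r)"
    unfolding ln_total_pay_def sum.distrib sum_distrib_left sum_subtractf
      sum_divide_distrib[symmetric] ..
  ultimately show ?thesis by (simp add: diff_divide_distrib)
qed

text \<open>At the smallest of the rates used by \<open>Truthful(f)\<close>, the payments for the true costs fall short
  of the budget only by the part of the payment of the seller whose cost was zeroed.\<close>

lemma ln_rule_min_rate:
  assumes v: "valid_instance S u c B" and \<theta>: "largeness S c B \<le> \<theta>"
  obtains r where "0 < r" "(\<Sum>i\<in>S. u i * ln_rule (c i / (u i * r))) \<le> truthful_util ln_rule S u c B"
    "(1 - \<theta>) * B \<le> ln_total_pay S u c r" "ln_total_pay S u c r \<le> B"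
proof -
  have fin: "finite S" and ne: "S \<noteq> {}" and B: "0 < B" and uc: "\<forall>i\<in>S. 0 < u i \<and> 0 \<le> c i"
    using v by (auto simp: valid_instance_def)
  define rate where "rate i = stop_rate ln_rule S u (c(i := 0)) B" for i
  have rate: "0 < rate i" "ln_total_pay S u (c(i := 0)) (rate i) = B" if "i \<in> S" for i
    using stop_rate_ln_rule[OF fin that _ B, of "c(i := 0)"] uc unfolding rate_def by auto
  have "Min (rate ` S) \<in> rate ` S" using fin ne by simp
  then obtain j where j: "j \<in> S" and rj: "rate j = Min (rate ` S)" by auto
  have min: "rate j \<le> rate i" if "i \<in> S" for i using fin that by (simp add: rj)
  define r where "r = rate j"
  define d where "d = u j * r * (1 - Q_ln (c j / (u j * r)))"
  have r: "0 < r" using rate(1)[OF j] by (simp add: r_def)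
  have budget: "B = ln_total_pay S u c r + d"
    using rate(2)[OF j] ln_total_pay_update_zero[OF fin j] by (simp add: d_def r_def)
  have uj: "0 < u j" and y: "0 \<le> c j / (u j * r)" using uc j r by auto
  have d0: "0 \<le> d" using Q_ln_le_one[OF y] uj r by (simp add: d_def)
  have "d \<le> u j * r * (c j / (u j * r))"
    using one_minus_Q_ln_le[OF y] uj r unfolding d_def by (intro mult_left_mono) auto
  also have "\<dots> = c j" using uj r by simp
  also have "\<dots> \<le> Max (c ` S)" using fin j by simp
  also have "\<dots> \<le> \<theta> * B" using \<theta> B by (simp add: largeness_def field_simps)
  finally have "d \<le> \<theta> * B" .
  moreover have "(\<Sum>i\<in>S. u i * ln_rule (c i / (u i * r))) \<le> truthful_util ln_rule S u c B"
    using truthful_util_ge[OF standard_alloc_ln_rule v r] min by (simp add: r_def rate_def)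
  ultimately show ?thesis using that[OF r] budget d0 by (simp add: algebra_simps)
qed

lemma ln_rule_ratio_ge:
  assumes v: "valid_instance S u c B" and \<theta>: "largeness S c B \<le> \<theta>" "\<theta> < 1"
  shows "(1 - 1 / exp 1) * (1 - \<theta>) \<le> truthful_util ln_rule S u c B / opt_util S u c B"
proof -
  have B: "0 < B" and uc: "\<forall>i\<in>S. 0 < u i \<and> 0 \<le> c i" using v by (auto simp: valid_instance_def)
  obtain r where r: "0 < r" and U_le: "(\<Sum>i\<in>S. u i * ln_rule (c i / (u i * r))) \<le> truthful_util ln_rule S u c B"
    and P: "(1 - \<theta>) * B \<le> ln_total_pay S u c r" "ln_total_pay S u c r \<le> B"
    using ln_rule_min_rate[OF v \<theta>(1)] .
  define U where "U = (\<Sum>i\<in>S. u i * ln_rule (c i / (u i * r)))"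
  define P where "P = ln_total_pay S u c r"
  have P_le: "P \<le> exp 1 * r * U" unfolding P_def U_def by (rule ln_total_pay_le_utility[OF uc r])
  have "0 \<le> \<theta> * B" using P by (simp add: algebra_simps)
  then have \<theta>0: "0 \<le> \<theta>" using B by (simp add: zero_le_mult_iff)
  define \<beta> where "\<beta> = (1 - 1 / exp 1) * (1 - \<theta>)"
  have \<beta>: "0 < \<beta>" using \<theta> by (simp add: \<beta>_def)
  have "\<beta> * (\<Sum>i\<in>S. u i * \<alpha> i) \<le> U" if \<alpha>: "knapsack_feasible S c B \<alpha>" for \<alpha>
  proof -
    have dual: "(1 - 1 / exp 1) * (\<Sum>i\<in>S. u i * \<alpha> i) \<le> U + ((\<Sum>i\<in>S. c i * \<alpha> i) - P) / (exp 1 * r)"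
      using ln_rule_weak_duality[OF uc r, of \<alpha>] \<alpha> by (simp add: knapsack_feasible_def U_def P_def)
    have "(1 - \<theta>) * ((\<Sum>i\<in>S. c i * \<alpha> i) - P) \<le> (1 - \<theta>) * (\<theta> * B)"
      using \<alpha> P \<theta> by (intro mult_left_mono) (auto simp: knapsack_feasible_def P_def algebra_simps)
    also have "\<dots> \<le> \<theta> * (exp 1 * r * U)"
      using P P_le \<theta>0 mult_left_mono[of "(1 - \<theta>) * B" "exp 1 * r * U" \<theta>]
      by (simp add: P_def algebra_simps)
    finally have "(1 - \<theta>) * (((\<Sum>i\<in>S. c i * \<alpha> i) - P) / (exp 1 * r)) \<le> \<theta> * U"
      using r by (simp add: field_simps)
    then show ?thesis
      using mult_left_mono[OF dual, of "1 - \<theta>"] \<theta> by (simp add: \<beta>_def algebra_simps)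
  qed
  then have "opt_util S u c B \<le> U / \<beta>"
    using \<beta> B by (intro opt_util_le) (auto simp: pos_le_divide_eq mult.commute)
  then have "\<beta> * opt_util S u c B \<le> truthful_util ln_rule S u c B"
    using \<beta> U_le by (simp add: U_def pos_le_divide_eq mult.commute)
  then show ?thesis
    using opt_util_pos[OF v] by (simp add: \<beta>_def pos_le_divide_eq)
qed

subsection \<open>An upper bound for every standard rule\<close>

lemma sum_two_blocks:
  assumes N: "0 < N"
  shows "(\<Sum>i<2 * N. (if i < N then p1 else p2) / real N * F (if i < N then y1 else y2))
           = p1 * F y1 + p2 * F y2"
proof -
  let ?f = "\<lambda>i. (if i < N then p1 else p2) / real N * F (if i < N then y1 else y2)"
  have "(\<Sum>i<2 * N. ?f i) = sum ?f {0..<2 * N}" by (simp add: lessThan_atLeast0)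
  also have "\<dots> = sum ?f {0..<N} + sum ?f {N..<2 * N}"
    by (rule sum.atLeastLessThan_concat[symmetric]) auto
  also have "sum ?f {0..<N} = p1 * F y1" using N by simp
  also have "sum ?f {N..<2 * N} = (\<Sum>i\<in>{N..<2 * N}. p2 / real N * F y2)" by (intro sum.cong) auto
  also have "\<dots> = p2 * F y2" using N by simp
  finally show ?thesis .
qed

text \<open>\<open>N\<close> identical small sellers for each of two utility totals \<open>p1, p2\<close> and normalised costs
  \<open>y1, y2\<close>; the largeness ratio vanishes as \<open>N\<close> grows.\<close>

lemma two_point_instance:
  assumes p: "0 < p1" "0 < p2" and y: "0 \<le> y1" "0 \<le> y2" and B: "0 < B" and \<theta>: "0 < \<theta>"
  obtains S u c where "valid_instance S u c B" "largeness S c B \<le> \<theta>"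
    "\<And>F. (\<Sum>i\<in>S. u i * F (c i / u i)) = p1 * F y1 + p2 * F y2"
proof -
  define K where "K = p1 * y1 + p2 * y2"
  define N where "N = nat \<lceil>K / (\<theta> * B)\<rceil> + 1"
  have N: "0 < N" by (simp add: N_def)
  have "K / (\<theta> * B) \<le> real N" unfolding N_def by linarith
  then have NK: "K / real N \<le> \<theta> * B" using \<theta> B N by (simp add: field_simps)
  define u where "u i = (if i < N then p1 else p2) / real N" for i
  define c where "c i = u i * (if i < N then y1 else y2)" for i
  have u: "0 < u i" for i using p N by (simp add: u_def)
  have S: "finite {..<2 * N}" "{..<2 * N} \<noteq> {}" using N by (simp_all add: lessThan_empty_iff)
  show ?thesis
  proof (rule that)
    have "0 \<le> c i" for i using u[of i] y by (simp add: c_def zero_le_mult_iff)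
    then show "valid_instance {..<2 * N} u c B"
      using S B u by (simp add: valid_instance_def)
    have "p1 * y1 \<le> K" "p2 * y2 \<le> K"
      using mult_nonneg_nonneg[of p1 y1] mult_nonneg_nonneg[of p2 y2] p y by (simp_all add: K_def)
    then have "c i \<le> K / real N" for i using N by (simp add: c_def u_def divide_right_mono)
    then have "Max (c ` {..<2 * N}) \<le> \<theta> * B" using S NK by (auto intro: order_trans)
    then show "largeness {..<2 * N} c B \<le> \<theta>" using B by (simp add: largeness_def divide_le_eq)
    have "c i / u i = (if i < N then y1 else y2)" for i using u[of i] by (simp add: c_def)
    then have "(\<Sum>i\<in>{..<2 * N}. u i * F (c i / u i))
        = (\<Sum>i<2 * N. u i * F (if i < N then y1 else y2))" for F
      by simp
    also have "\<dots> F = p1 * F y1 + p2 * F y2" for F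
      using sum_two_blocks[OF N, of p1 p2 F y1 y2] by (simp add: u_def)
    finally show "(\<Sum>i\<in>{..<2 * N}. u i * F (c i / u i)) = p1 * F y1 + p2 * F y2" for F .
  qed
qed

text \<open>Budget a fraction \<open>\<eta>\<close> of the total payment at rate 1 of a two-point instance: then every rate
  used by \<open>Truthful(g)\<close> is at most 1, while buying the fraction \<open>\<eta>\<close> of every item is feasible.\<close>

lemma two_point_instance_bound:
  assumes g: "standard_alloc g" and \<theta>: "0 < \<theta>"
    and p: "0 < p1" "0 < p2" and y: "0 \<le> y1" "0 \<le> y2" and \<eta>: "0 < \<eta>" "\<eta> < 1"
    and bal: "p1 * y1 + p2 * y2 \<le> p1 * Qr g 1 y1 + p2 * Qr g 1 y2"
    and pos: "0 < p1 * Qr g 1 y1 + p2 * Qr g 1 y2"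
  shows "\<eta> * (p1 + p2) * worst_ratio g \<theta> \<le> p1 * g y1 + p2 * g y2"
proof -
  define P where "P = p1 * Qr g 1 y1 + p2 * Qr g 1 y2"
  define B where "B = \<eta> * P"
  have B: "0 < B" "B < P" using pos \<eta> by (simp_all add: B_def P_def)
  obtain S u c where v: "valid_instance S u c B" and l: "largeness S c B \<le> \<theta>"
    and sum: "\<And>F. (\<Sum>i\<in>S. u i * F (c i / u i)) = p1 * F y1 + p2 * F y2"
    using two_point_instance[OF p y B(1) \<theta>] by blast
  have u: "\<And>i. i \<in> S \<Longrightarrow> 0 < u i" using v by (simp add: valid_instance_def)
  have "total_pay g S u c 1 = P"
    using sum[of "Qr g 1"] by (simp add: total_pay_def Pay_def P_def)
  then have "truthful_util g S u c B \<le> (\<Sum>i\<in>S. u i * g (c i / u i))"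
    unfolding truthful_util_def using u B(2)
    by (intro sum_mono mult_left_mono truthful_alloc_le[OF g v]) (auto simp: less_imp_le)
  also have "\<dots> = p1 * g y1 + p2 * g y2" by (rule sum)
  finally have UT: "truthful_util g S u c B \<le> p1 * g y1 + p2 * g y2" .
  have "u i \<noteq> 0" if "i \<in> S" for i using u[OF that] by simp
  then have "(\<Sum>i\<in>S. c i * \<eta>) = (\<Sum>i\<in>S. u i * (\<eta> * (c i / u i)))"
    by (intro sum.cong) auto
  also have "\<dots> \<le> B"
    using sum[of "\<lambda>t. \<eta> * t"] mult_left_mono[OF bal, of \<eta>] \<eta> by (simp add: B_def P_def algebra_simps)
  finally have "knapsack_feasible S c B (\<lambda>_. \<eta>)" using \<eta> by (simp add: knapsack_feasible_def)
  from opt_util_ge[OF v this] have OPT: "\<eta> * (p1 + p2) \<le> opt_util S u c B"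
    using sum[of "\<lambda>_. \<eta>"] by (simp add: algebra_simps)
  have k: "0 < \<eta> * (p1 + p2)" using \<eta> p by simp
  have "worst_ratio g \<theta> \<le> truthful_util g S u c B / opt_util S u c B"
    by (rule worst_ratio_le[OF g v l])
  also have "\<dots> \<le> truthful_util g S u c B / (\<eta> * (p1 + p2))"
    using truthful_util_nonneg[OF g v] OPT k by (intro divide_left_mono) auto
  also have "\<dots> \<le> (p1 * g y1 + p2 * g y2) / (\<eta> * (p1 + p2))"
    using UT k by (intro divide_right_mono) auto
  finally show ?thesis using k by (simp add: pos_le_divide_eq mult.commute)
qed

lemma worst_ratio_two_point_bound:
  assumes g: "standard_alloc g" and \<theta>: "0 < \<theta>"
    and p: "0 < p1" "0 < p2" and y: "0 \<le> y1" "0 \<le> y2"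
    and bal: "p1 * y1 + p2 * y2 \<le> p1 * Qr g 1 y1 + p2 * Qr g 1 y2"
    and pos: "0 < p1 * Qr g 1 y1 + p2 * Qr g 1 y2"
  shows "worst_ratio g \<theta> * (p1 + p2) \<le> p1 * g y1 + p2 * g y2"
proof (rule field_le_mult_one_interval)
  fix \<eta> :: real assume "0 < \<eta>" "\<eta> < 1"
  from two_point_instance_bound[OF g \<theta> p y this bal pos]
  show "\<eta> * (worst_ratio g \<theta> * (p1 + p2)) \<le> p1 * g y1 + p2 * g y2" by (simp add: algebra_simps)
qed

lemma worst_ratio_nonpos_if_integral_zero:
  assumes g: "standard_alloc g" and \<theta>: "0 < \<theta>" and G0: "integral {0..} g = 0"
  shows "worst_ratio g \<theta> \<le> 0"
proof -
  have vanish: "g y = 0" if y: "0 < y" for y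
  proof -
    have "y * g y + integral {y..} g \<le> 0"
      using alloc_profile_integral_split[OF alloc_profile_standard[OF g], of 0 y] y G0 by simp
    moreover have "0 \<le> integral {y..} g" "0 \<le> g y"
      using alloc_profile_integral_nonneg[OF alloc_profile_standard[OF g]] standard_alloc_nonneg[OF g] y
      by auto
    ultimately have "y * g y = 0" using mult_nonneg_nonneg[of y "g y"] y by linarith
    then show ?thesis using y by simp
  qed
  let ?S = "{0::nat}" and ?u = "\<lambda>_::nat. 1::real" and ?c = "\<lambda>_::nat. \<theta>"
  have v: "valid_instance ?S ?u ?c 1" using \<theta> by (simp add: valid_instance_def)
  have "truthful_util g ?S ?u ?c 1 = 0"
    using vanish stop_rate_update_zero_pos[OF g v, of 0] \<theta>
    by (simp add: truthful_util_def truthful_alloc_def scaled_def)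
  then show ?thesis using worst_ratio_le[OF g v] by (simp add: largeness_def)
qed

lemma two_point_slope_le:
  fixes g Q :: "real \<Rightarrow> real" and b y s :: real
  assumes Q_nonneg: "\<And>y. 0 \<le> y \<Longrightarrow> 0 \<le> Q y"
    and two_point: "\<And>y1 y2 p1 p2. 0 \<le> y1 \<Longrightarrow> 0 \<le> y2 \<Longrightarrow> 0 < p1 \<Longrightarrow> 0 < p2 \<Longrightarrow>
        p1 * y1 + p2 * y2 \<le> p1 * Q y1 + p2 * Q y2 \<Longrightarrow> 0 < p1 * Q y1 + p2 * Q y2 \<Longrightarrow>
        b * (p1 + p2) \<le> p1 * g y1 + p2 * g y2"
    and y: "0 \<le> y" "Q y < y" and s: "0 \<le> s" "s < Q s"
  shows "(b - g y) / (y - Q y) \<le> (g s - b) / (Q s - s)"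
proof -
  have "0 < y" using Q_nonneg[OF y(1)] y(2) by linarith
  then have "0 < (Q s - s) * y" using s by simp
  moreover have "0 \<le> (y - Q y) * s" using y s by simp
  moreover have "(y - Q y) * Q s + (Q s - s) * Q y = (y - Q y) * s + (Q s - s) * y"
    by (simp add: algebra_simps)
  ultimately have "(y - Q y) * s + (Q s - s) * y \<le> (y - Q y) * Q s + (Q s - s) * Q y"
    "0 < (y - Q y) * Q s + (Q s - s) * Q y" by linarith+
  from two_point[OF s(1) y(1) _ _ this] y(2) s(2)
  have "b * ((y - Q y) + (Q s - s)) \<le> (y - Q y) * g s + (Q s - s) * g y" by simp
  then have "(b - g y) * (Q s - s) \<le> (g s - b) * (y - Q y)" by (simp add: algebra_simps)
  then show ?thesis using y s by (simp add: divide_le_eq le_divide_eq field_simps)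
qed

text \<open>The two-point inequality places all points \<open>(y - Q y, b - g y)\<close>, \<open>y \<ge> 0\<close>, below a line of
  positive slope \<open>\<kappa>\<close> through the origin.\<close>

lemma separating_slope:
  fixes g Q :: "real \<Rightarrow> real" and b z :: real
  assumes Q_nonneg: "\<And>y. 0 \<le> y \<Longrightarrow> 0 \<le> Q y" and Q0: "0 < Q 0" and g0: "g 0 = 1"
    and z: "0 \<le> z" "Q z < z" "g z < b"
    and two_point: "\<And>y1 y2 p1 p2. 0 \<le> y1 \<Longrightarrow> 0 \<le> y2 \<Longrightarrow> 0 < p1 \<Longrightarrow> 0 < p2 \<Longrightarrow>
        p1 * y1 + p2 * y2 \<le> p1 * Q y1 + p2 * Q y2 \<Longrightarrow> 0 < p1 * Q y1 + p2 * Q y2 \<Longrightarrow>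
        b * (p1 + p2) \<le> p1 * g y1 + p2 * g y2"
  obtains \<kappa> where "0 < \<kappa>" "\<And>s. 0 \<le> s \<Longrightarrow> b - \<kappa> * (s - Q s) \<le> g s"
proof -
  note slope_le = two_point_slope_le[of Q b g, OF Q_nonneg two_point]
  define K where "K = {(b - g y) / (y - Q y) | y. 0 \<le> y \<and> Q y < y}"
  have zK: "(b - g z) / (z - Q z) \<in> K" using z by (auto simp: K_def)
  have bdd: "bdd_above K"
    using slope_le[of _ 0] Q0 by (intro bdd_aboveI[of _ "(g 0 - b) / (Q 0 - 0)"]) (auto simp: K_def)
  define \<kappa> where "\<kappa> = Sup K"
  show ?thesis
  proof (rule that)
    have "0 < (b - g z) / (z - Q z)" using z by simp
    then show "0 < \<kappa>" using cSup_upper[OF zK bdd] by (simp add: \<kappa>_def)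
    fix s :: real assume s: "0 \<le> s"
    consider "Q s < s" | "s < Q s" | "Q s = s" by linarith
    then show "b - \<kappa> * (s - Q s) \<le> g s"
    proof cases
      case 1
      have "(b - g s) / (s - Q s) \<le> \<kappa>"
        unfolding \<kappa>_def using s 1 by (intro cSup_upper[OF _ bdd]) (auto simp: K_def)
      then show ?thesis using 1 by (simp add: divide_le_eq mult.commute)
    next
      case 2
      have "\<kappa> \<le> (g s - b) / (Q s - s)"
        unfolding \<kappa>_def using zK slope_le s 2 by (intro cSup_least) (auto simp: K_def)
      then have "\<kappa> * (Q s - s) \<le> g s - b" using 2 pos_le_divide_eq[of "Q s - s"] by simp
      then show ?thesis by (simp add: algebra_simps)
    next
      case 3
      then have "0 < s" using Q0 s by (cases "s = 0") auto
      then have "b * (1 + 1) \<le> 1 * g s + 1 * g s" using 3 s by (intro two_point) auto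
      then show ?thesis using 3 by simp
    qed
  qed
qed

text \<open>With \<open>\<kappa> A = 1 - b\<close>, the potential is non-increasing along solutions of the differential inequality
  \<open>b - \<kappa> y + \<kappa> G y \<le> -G' y (1 - \<kappa> y)\<close>. The discrete version below loses
  \<open>h / (1 - \<kappa> (t + h)) - h / (1 - \<kappa> t)\<close> per step, and these losses telescope.\<close>

definition potential :: "(real \<Rightarrow> real) \<Rightarrow> real \<Rightarrow> real \<Rightarrow> real \<Rightarrow> real" where
  "potential G \<kappa> A y = (G y - A) / (1 - \<kappa> * y) - ln (1 - \<kappa> * y) / \<kappa>"

lemma potential_step:
  fixes G g :: "real \<Rightarrow> real"
  assumes \<kappa>: "0 < \<kappa>" and h: "0 < h" and a: "0 < 1 - \<kappa> * (t + h)" and \<kappa>A: "\<kappa> * A = 1 - b"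
    and G: "G (t + h) + h * g (t + h) \<le> G t"
    and ineq: "b - \<kappa> * (t + h) + \<kappa> * G (t + h) \<le> g (t + h) * (1 - \<kappa> * (t + h))"
  shows "potential G \<kappa> A (t + h) - potential G \<kappa> A t \<le> h / (1 - \<kappa> * (t + h)) - h / (1 - \<kappa> * t)"
proof -
  define s where "s = t + h"
  define aS where "aS = 1 - \<kappa> * s"
  define aT where "aT = 1 - \<kappa> * t"
  define W where "W = G s - A"
  have aS: "0 < aS" using a by (simp add: aS_def s_def)
  have aT: "aT = aS + \<kappa> * h" by (simp add: aS_def aT_def s_def algebra_simps)
  have aT_pos: "0 < aT" using aS mult_pos_pos[OF \<kappa> h] by (simp add: aT)
  have "aS + \<kappa> * W = b - \<kappa> * s + \<kappa> * G s" using \<kappa>A by (simp add: aS_def W_def algebra_simps)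
  then have "h * (aS + \<kappa> * W) \<le> h * (g s * aS)"
    using ineq h by (intro mult_left_mono) (auto simp: aS_def s_def)
  then have "h + h * \<kappa> * W / aS \<le> h * g s" using aS by (simp add: field_simps)
  moreover have "W * aT / aS = W + h * \<kappa> * W / aS" using aS by (simp add: aT field_simps)
  ultimately have "W * aT / aS + h \<le> G t - A" using G by (simp add: W_def s_def)
  then have "(W * aT / aS + h) / aT \<le> (G t - A) / aT" using aT_pos by (intro divide_right_mono) auto
  moreover have "(W * aT / aS + h) / aT = W / aS + h / aT" using aT_pos aS by (simp add: field_simps)
  ultimately have W: "W / aS + h / aT \<le> (G t - A) / aT" by simp
  have "ln aT - ln aS \<le> aT / aS - 1"
    using ln_le_minus_one[of "aT / aS"] aT_pos aS by (simp add: ln_div)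
  also have "\<dots> = \<kappa> * h / aS" using aS by (simp add: aT field_simps)
  finally have "(ln aT - ln aS) / \<kappa> \<le> h / aS" using \<kappa> by (simp add: divide_le_eq field_simps)
  then show ?thesis using W
    by (simp add: potential_def W_def aS_def aT_def s_def diff_divide_distrib)
qed

lemma potential_grid:
  fixes G g :: "real \<Rightarrow> real"
  assumes \<kappa>: "0 < \<kappa>" and \<kappa>A: "\<kappa> * A = 1 - b" and y0: "0 < y0" "\<kappa> * y0 < 1"
    and G_decr: "\<And>t s. 0 \<le> t \<Longrightarrow> t \<le> s \<Longrightarrow> G s + (s - t) * g s \<le> G t"
    and ineq: "\<And>s. 0 \<le> s \<Longrightarrow> b - \<kappa> * s + \<kappa> * G s \<le> g s * (1 - \<kappa> * s)"
    and n: "0 < n"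
  shows "potential G \<kappa> A y0 \<le> potential G \<kappa> A 0 + y0 / real n * (1 / (1 - \<kappa> * y0) - 1)"
proof -
  define h where "h = y0 / real n"
  have h: "0 < h" using y0 n by (simp add: h_def)
  have "potential G \<kappa> A (real k * h) \<le> potential G \<kappa> A 0 + h * (1 / (1 - \<kappa> * (real k * h)) - 1)"
    if "k \<le> n" for k
    using that
  proof (induction k)
    case (Suc k)
    define t where "t = real k * h"
    have t: "0 \<le> t" "real (Suc k) * h = t + h" using h by (simp_all add: t_def algebra_simps)
    have "real (Suc k) * h \<le> y0" using Suc.prems h n mult_right_mono[of "real (Suc k)" "real n" h]
      by (simp add: h_def)
    then have "\<kappa> * (t + h) \<le> \<kappa> * y0" using \<kappa> t by (intro mult_left_mono) auto
    then have "0 < 1 - \<kappa> * (t + h)" using y0 by simp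
    from potential_step[OF \<kappa> h this \<kappa>A, of G g] G_decr[of t "t + h"] ineq[of "t + h"] t h
    have "potential G \<kappa> A (t + h) - potential G \<kappa> A t \<le> h / (1 - \<kappa> * (t + h)) - h / (1 - \<kappa> * t)"
      by (simp add: mult.commute)
    then show ?case using Suc by (simp add: t algebra_simps t_def)
  qed simp
  from this[of n] n show ?thesis by (simp add: h_def)
qed

lemma tail_ineq_bound:
  fixes G g :: "real \<Rightarrow> real"
  assumes \<kappa>: "0 < \<kappa>" and G_nonneg: "\<And>y. 0 \<le> y \<Longrightarrow> 0 \<le> G y"
    and G_decr: "\<And>t s. 0 \<le> t \<Longrightarrow> t \<le> s \<Longrightarrow> G s + (s - t) * g s \<le> G t"
    and g0: "g 0 = 1"
    and ineq: "\<And>s. 0 \<le> s \<Longrightarrow> b - \<kappa> * s + \<kappa> * G s \<le> g s * (1 - \<kappa> * s)"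
  shows "b \<le> 1 - 1 / exp 1"
proof (rule ccontr)
  define m where "m = 1 - exp 1 * (1 - b)"
  assume "\<not> b \<le> 1 - 1 / exp 1"
  then have m: "0 < m" by (simp add: m_def field_simps)
  define A where "A = (1 - b) / \<kappa>"
  have \<kappa>A: "\<kappa> * A = 1 - b" using \<kappa> by (simp add: A_def)
  define y0 where "y0 = (1 - 1 / exp 1) / \<kappa>"
  have y0: "0 < y0" "\<kappa> * y0 < 1" and a0: "1 - \<kappa> * y0 = 1 / exp 1" using \<kappa> by (simp_all add: y0_def)
  have "\<kappa> * G 0 \<le> \<kappa> * A" using ineq[of 0] g0 \<kappa>A by simp
  then have P0: "potential G \<kappa> A 0 \<le> 0" using \<kappa> by (simp add: potential_def)
  have "m / \<kappa> = 1 / \<kappa> - exp 1 * A" using \<kappa> by (simp add: m_def A_def field_simps)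
  also have "\<dots> \<le> potential G \<kappa> A y0"
    using G_nonneg[of y0] y0 by (simp add: potential_def a0 ln_div algebra_simps)
  finally have Py0: "m / \<kappa> \<le> potential G \<kappa> A y0" .
  define n where "n = nat \<lceil>y0 * (exp 1 - 1) * \<kappa> / m\<rceil> + 1"
  have n: "0 < n" by (simp add: n_def)
  have "potential G \<kappa> A y0 \<le> y0 / real n * (exp 1 - 1)"
    using potential_grid[OF \<kappa> \<kappa>A y0 G_decr ineq n] P0 a0 by simp
  moreover have "y0 * (exp 1 - 1) * \<kappa> / m < real n" unfolding n_def by linarith
  then have "y0 / real n * (exp 1 - 1) < m / \<kappa>" using n \<kappa> m by (simp add: field_simps)
  ultimately show False using Py0 by simp
qed

lemma SUP_worst_ratio_le:
  assumes g: "standard_alloc g"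
  shows "(SUP \<theta>\<in>{0<..}. worst_ratio g \<theta>) \<le> 1 - 1 / exp 1"
proof (rule ccontr)
  assume "\<not> ?thesis"
  then obtain \<theta> where \<theta>: "0 < \<theta>" and b: "1 - 1 / exp 1 < worst_ratio g \<theta>"
    using less_cSUP_iff[OF _ worst_ratio_bdd_above[OF g]] by (auto simp: not_le)
  define G where "G y = integral {y..} g" for y
  have prof: "alloc_profile g (exp 1 - 1)" by (rule alloc_profile_standard[OF g])
  have Q: "Qr g 1 y = y * g y + G y" for y by (simp add: Qr_eq G_def)
  have G_nonneg: "0 \<le> G y" if "0 \<le> y" for y
    unfolding G_def using alloc_profile_integral_nonneg[OF prof that] .
  have "1 / exp 1 < (1::real)" by simp
  then have b0: "0 < worst_ratio g \<theta>" using b by linarith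
  then have "G 0 \<noteq> 0" using worst_ratio_nonpos_if_integral_zero[OF g \<theta>] by (force simp: G_def)
  then have Q0: "0 < Qr g 1 0" using G_nonneg[of 0] by (simp add: Q)
  have "G (exp 1 - 1) = 0"
    using alloc_profile_integral_eq[OF prof, of "exp 1 - 1"] by (simp add: G_def)
  then have Qe: "Qr g 1 (exp 1 - 1) = 0" using standard_alloc_vanishes[OF g] by (simp add: Q)
  obtain \<kappa> where \<kappa>: "0 < \<kappa>" and sep: "\<And>s. 0 \<le> s \<Longrightarrow> worst_ratio g \<theta> - \<kappa> * (s - Qr g 1 s) \<le> g s"
  proof (rule separating_slope[of "Qr g 1" g "exp 1 - 1" "worst_ratio g \<theta>"])
    show "0 \<le> Qr g 1 y" if "0 \<le> y" for y using Qr_nonneg[OF g _ that] by simp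
    show "0 < Qr g 1 0" "g 0 = 1" using Q0 standard_alloc_at_zero[OF g] by simp_all
    show "0 \<le> exp (1::real) - 1" "Qr g 1 (exp 1 - 1) < exp 1 - 1" "g (exp 1 - 1) < worst_ratio g \<theta>"
      using Qe b0 standard_alloc_vanishes[OF g] by simp_all
    show "worst_ratio g \<theta> * (p1 + p2) \<le> p1 * g y1 + p2 * g y2"
      if "0 \<le> y1" "0 \<le> y2" "0 < p1" "0 < p2" "p1 * y1 + p2 * y2 \<le> p1 * Qr g 1 y1 + p2 * Qr g 1 y2"
        "0 < p1 * Qr g 1 y1 + p2 * Qr g 1 y2" for y1 y2 p1 p2
      using that by (intro worst_ratio_two_point_bound[OF g \<theta>])
  qed (rule that)
  have "worst_ratio g \<theta> \<le> 1 - 1 / exp 1"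
  proof (rule tail_ineq_bound[OF \<kappa>, where G = G and g = g])
    show "0 \<le> G y" if "0 \<le> y" for y using G_nonneg[OF that] .
    show "G s + (s - t) * g s \<le> G t" if "0 \<le> t" "t \<le> s" for t s
      using alloc_profile_integral_split[OF prof that] by (simp add: G_def add.commute)
    show "g 0 = 1" by (rule standard_alloc_at_zero[OF g])
    show "worst_ratio g \<theta> - \<kappa> * s + \<kappa> * G s \<le> g s * (1 - \<kappa> * s)" if "0 \<le> s" for s
      using sep[OF that] by (simp add: Q algebra_simps)
  qed
  with b show False by simp
qed

lemma SUP_worst_ratio_ln_rule_ge: "1 - 1 / exp 1 \<le> (SUP \<theta>\<in>{0<..}. worst_ratio ln_rule \<theta>)"
proof (rule field_le_mult_one_interval)
  fix z :: real assume z: "0 < z" "z < 1"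
  have "(1 - 1 / exp 1) * (1 - (1 - z)) \<le> worst_ratio ln_rule (1 - z)"
  proof (rule worst_ratio_ge[OF standard_alloc_ln_rule])
    fix S u c B assume "valid_instance S u c B" "largeness S c B \<le> 1 - z"
    then show "(1 - 1 / exp 1) * (1 - (1 - z)) \<le> truthful_util ln_rule S u c B / opt_util S u c B"
      using z by (intro ln_rule_ratio_ge) auto
  qed (use z in simp)
  also have "\<dots> \<le> (SUP \<theta>\<in>{0<..}. worst_ratio ln_rule \<theta>)"
    using z by (intro cSUP_upper worst_ratio_bdd_above[OF standard_alloc_ln_rule]) auto
  finally show "z * (1 - 1 / exp 1) \<le> (SUP \<theta>\<in>{0<..}. worst_ratio ln_rule \<theta>)"
    by (simp add: mult.commute)
qed

theorem theorem1:
  shows "standard_alloc ln_rule \<and> lm_ratio_is ln_rule (1 - 1 / exp 1) \<and>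
         (\<forall>g. standard_alloc g \<longrightarrow> (\<exists>L. lm_ratio_is g L \<and> L \<le> 1 - 1 / exp 1))"
proof (intro conjI allI impI)
  show "standard_alloc ln_rule" by (rule standard_alloc_ln_rule)
  have "(SUP \<theta>\<in>{0<..}. worst_ratio ln_rule \<theta>) = 1 - 1 / exp 1"
    using SUP_worst_ratio_ln_rule_ge SUP_worst_ratio_le[OF standard_alloc_ln_rule] by simp
  then show "lm_ratio_is ln_rule (1 - 1 / exp 1)"
    using lm_ratio_is_SUP[OF standard_alloc_ln_rule] by simp
next
  fix g :: "real \<Rightarrow> real" assume "standard_alloc g"
  then show "\<exists>L. lm_ratio_is g L \<and> L \<le> 1 - 1 / exp 1"
    using lm_ratio_is_SUP SUP_worst_ratio_le by blast
qed

end
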